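(* Let $\mathbb{F}$ be a field and $\mathcal{H}=(Q_0,Q_1,\beta)$ a directed tensor-labeled hypergraph. Suppose there exist $r\ge1$, distinct elements $w_0,w_1,\dots,w_r\in V_{\mathrm{macro}}$ and distinct hyperedges $e_1,\dots,e_r\in Q_1$ with $\beta(\mathbf{1}_{e_i})=(w_0,w_i)$ for $i=1,\dots,r$. If there is $(\alpha_1,\dots,\alpha_r)\in\mathbb{F}^r\setminus\{0\}$ with $\sum_{i=1}^r\alpha_i(w_i-w_0)=0$ in $T(\mathbb{F}^{Q_0})$, then $\xi:=\sum_i\alpha_i\mathbf{1}_{e_i}$ satisfies $\partial_\beta(\xi)=0$ and $B_{\mathrm{macro}}(\xi)\in(\mathrm{Im}(B_{\mathrm{macro}})\cap\mathrm{Ker}(\hat\phi))\setminus\{0\}$. In particular $\delta(\mathcal{H})\ge1$.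
   Context: $T(\mathbb{F}^{Q_0})=\bigoplus_{k\ge0}(\mathbb{F}^{Q_0})^{\otimes k}$. A directed tensor-labeled hypergraph is $\mathcal{H}=(Q_0,Q_1,\beta)$ ($Q_0,Q_1$ finite) with $\beta:\mathbb{F}^{Q_1}\to T(\mathbb{F}^{Q_0})\times T(\mathbb{F}^{Q_0})$ linear, $\beta(\mathbf{1}_e)=(A_e,B_e)$. $\partial_\beta:\mathbf{1}_e\mapsto B_e-A_e$. $V_{\mathrm{macro}}=\{A_e\}\cup\{B_e\}$; $B_{\mathrm{macro}}:\mathbb{F}^{Q_1}\to\mathbb{F}^{V_{\mathrm{macro}}}$, $\mathbf{1}_e\mapsto\mathbf{1}_{B_e}-\mathbf{1}_{A_e}$; $\hat\phi:\mathbb{F}^{V_{\mathrm{macro}}}\to T(\mathbb{F}^{Q_0})$, $\mathbf{1}_w\mapsto w$; $\delta(\mathcal{H})=\dim(\mathrm{Im}B_{\mathrm{macro}}\cap\mathrm{Ker}\hat\phi)$. *)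

theory Defs
  imports Complex_Main "HOL-Library.Function_Algebras"
begin

text \<open>Model of the tensor algebra T(F^{Q0}): the words (lists) over Q0 form a basis
  of T(F^{Q0}) (degree k part = words of length k), so an element is a finitely
  supported coefficient function on words with letters in Q0.\<close>

type_synonym ('v,'a) tensor = "'v list \<Rightarrow> 'a"

definition tensor_alg :: "'v set \<Rightarrow> ('v,'a::zero) tensor set" where
  "tensor_alg Q0 = {t. finite {u. t u \<noteq> 0} \<and> (\<forall>u. t u \<noteq> 0 \<longrightarrow> set u \<subseteq> Q0)}"

definition fscale :: "'a::field \<Rightarrow> ('b \<Rightarrow> 'a) \<Rightarrow> ('b \<Rightarrow> 'a)" where
  "fscale c f = (\<lambda>x. c * f x)"

text \<open>A directed tensor-labeled hypergraph (Q0,Q1,beta); beta is the linear map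
  determined by beta(1_e) = (A e, B e).\<close>
definition hypergraph :: "'v set \<Rightarrow> 'e set \<Rightarrow> ('e \<Rightarrow> ('v,'a::zero) tensor) \<Rightarrow> ('e \<Rightarrow> ('v,'a) tensor) \<Rightarrow> bool" where
  "hypergraph Q0 Q1 A B \<longleftrightarrow> finite Q0 \<and> finite Q1 \<and>
     (\<forall>e\<in>Q1. A e \<in> tensor_alg Q0 \<and> B e \<in> tensor_alg Q0)"

definition ind :: "'e \<Rightarrow> 'e \<Rightarrow> 'a::{zero,one}" where
  "ind e = (\<lambda>x. if x = e then 1 else 0)"

definition boundary :: "'e set \<Rightarrow> ('e \<Rightarrow> ('v,'a::field) tensor) \<Rightarrow> ('e \<Rightarrow> ('v,'a) tensor)
    \<Rightarrow> ('e \<Rightarrow> 'a) \<Rightarrow> ('v,'a) tensor" where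
  "boundary Q1 A B xi = (\<lambda>u. \<Sum>e\<in>Q1. xi e * (B e u - A e u))"

definition Vmacro :: "'e set \<Rightarrow> ('e \<Rightarrow> ('v,'a) tensor) \<Rightarrow> ('e \<Rightarrow> ('v,'a) tensor) \<Rightarrow> ('v,'a) tensor set" where
  "Vmacro Q1 A B = A ` Q1 \<union> B ` Q1"

definition Bmacro :: "'e set \<Rightarrow> ('e \<Rightarrow> ('v,'a::field) tensor) \<Rightarrow> ('e \<Rightarrow> ('v,'a) tensor)
    \<Rightarrow> ('e \<Rightarrow> 'a) \<Rightarrow> (('v,'a) tensor \<Rightarrow> 'a)" where
  "Bmacro Q1 A B xi = (\<lambda>w. \<Sum>e\<in>Q1. xi e * ((if w = B e then 1 else 0) - (if w = A e then 1 else 0)))"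

definition phihat :: "'e set \<Rightarrow> ('e \<Rightarrow> ('v,'a::field) tensor) \<Rightarrow> ('e \<Rightarrow> ('v,'a) tensor)
    \<Rightarrow> (('v,'a) tensor \<Rightarrow> 'a) \<Rightarrow> ('v,'a) tensor" where
  "phihat Q1 A B c = (\<lambda>u. \<Sum>w\<in>Vmacro Q1 A B. c w * w u)"

definition FVmacro :: "'e set \<Rightarrow> ('e \<Rightarrow> ('v,'a) tensor) \<Rightarrow> ('e \<Rightarrow> ('v,'a) tensor) \<Rightarrow> (('v,'a::zero) tensor \<Rightarrow> 'a) set" where
  "FVmacro Q1 A B = {c. \<forall>w. w \<notin> Vmacro Q1 A B \<longrightarrow> c w = 0}"

definition ImBmacro where
  "ImBmacro Q1 A B = {Bmacro Q1 A B xi | xi. \<forall>e. e \<notin> Q1 \<longrightarrow> xi e = 0}"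

definition Kerphihat where
  "Kerphihat Q1 A B = {c \<in> FVmacro Q1 A B. phihat Q1 A B c = (\<lambda>_. 0)}"

definition delta :: "'e set \<Rightarrow> ('e \<Rightarrow> ('v,'a::field) tensor) \<Rightarrow> ('e \<Rightarrow> ('v,'a) tensor) \<Rightarrow> nat" where
  "delta Q1 A B = vector_space.dim fscale (ImBmacro Q1 A B \<inter> Kerphihat Q1 A B)"

end

theory Submission
  imports Defs
begin

text \<open>Both phi-hat after B_macro and the boundary map send \<open>1\<^sub>e\<close> to \<open>B\<^sub>e - A\<^sub>e\<close>,
  so they agree, and \<open>B_macro \<xi>\<close> lies in Ker phi-hat as soon as \<open>\<partial>\<^sub>\<beta> \<xi> = 0\<close>, which is
  the assumed relation. In the star configuration \<open>B_macro \<xi> = \<Sum>\<^sub>i \<alpha>\<^sub>i (1(w\<^sub>i) - 1(w\<^sub>0))\<close>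
  equals \<open>\<alpha>\<^sub>j\<close> at the leaf \<open>w\<^sub>j\<close> because the \<open>w\<^sub>i\<close> are distinct; so it is a
  nonzero vector of Im B_macro \<inter> Ker phi-hat, which therefore has dimension at least one.\<close>

lemma vector_space_fscale: "vector_space (fscale :: 'a::field \<Rightarrow> ('b \<Rightarrow> 'a) \<Rightarrow> ('b \<Rightarrow> 'a))"
  by unfold_locales (auto simp: fscale_def fun_eq_iff algebra_simps)

lemma (in vector_space) dim_ge_1_if_nonzero_in_finite_span:
  assumes "x \<in> S" "x \<noteq> 0" "S \<subseteq> span G" "finite G"
  shows "1 \<le> dim S"
proof -
  obtain D where D: "D \<subseteq> S" "independent D" "S \<subseteq> span D" "card D = dim S"
    by (rule basis_exists)
  have "finite D"
    using independent_span_bound[OF \<open>finite G\<close> \<open>independent D\<close>] D(1) assms(3) by blast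
  moreover have "D \<noteq> {}"
    using D(3) assms(1,2) by auto
  ultimately show ?thesis
    using D(4) by (metis One_nat_def Suc_leI card_gt_0_iff)
qed

lemma sum_apply: "(sum f S) x = (\<Sum>i\<in>S. f i x)"
  by (induct S rule: infinite_finite_induct) auto

lemma finite_support_subset_span_ind:
  fixes V :: "'b set"
  assumes "finite V"
  shows "{c :: 'b \<Rightarrow> 'a::field. \<forall>x. x \<notin> V \<longrightarrow> c x = 0} \<subseteq> module.span fscale (ind ` V)"
proof
  interpret vs: vector_space "fscale :: 'a \<Rightarrow> ('b \<Rightarrow> 'a) \<Rightarrow> _"
    by (rule vector_space_fscale)
  fix c :: "'b \<Rightarrow> 'a"
  assume "c \<in> {c. \<forall>x. x \<notin> V \<longrightarrow> c x = 0}"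
  then have "c = (\<Sum>v\<in>V. fscale (c v) (ind v))"
    using assms
    by (auto simp: fun_eq_iff fscale_def ind_def sum_apply if_distrib[of "\<lambda>a. _ * a"] cong: if_cong)
  also have "\<dots> \<in> vs.span (ind ` V)"
    by (intro vs.span_sum vs.span_scale vs.span_base) auto
  finally show "c \<in> vs.span (ind ` V)" .
qed

lemma sum_combination_ind:
  fixes g :: "'e \<Rightarrow> 'a::comm_ring_1"
  assumes "finite Q" "e ` I \<subseteq> Q"
  shows "(\<Sum>f\<in>Q. (\<Sum>i\<in>I. \<alpha> i * ind (e i) f) * g f) = (\<Sum>i\<in>I. \<alpha> i * g (e i))"
proof -
  have "(\<Sum>f\<in>Q. (\<Sum>i\<in>I. \<alpha> i * ind (e i) f) * g f) = (\<Sum>i\<in>I. \<alpha> i * (\<Sum>f\<in>Q. ind (e i) f * g f))"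
    by (simp add: sum_distrib_right sum_distrib_left mult.assoc sum.swap[where A = Q])
  also have "\<dots> = (\<Sum>i\<in>I. \<alpha> i * g (e i))"
    using assms by (intro sum.cong refl) (auto simp: ind_def if_distrib[of "\<lambda>c. c * _"] cong: if_cong)
  finally show ?thesis .
qed

lemma Bmacro_in_FVmacro: "Bmacro Q1 A B \<xi> \<in> FVmacro Q1 A B"
  by (auto simp: FVmacro_def Bmacro_def Vmacro_def intro!: sum.neutral)

lemma phihat_Bmacro:
  assumes "finite Q1"
  shows "phihat Q1 A B (Bmacro Q1 A B \<xi>) = boundary Q1 A B \<xi>"
proof
  fix u
  let ?V = "Vmacro Q1 A B"
  have "finite ?V"
    using assms by (simp add: Vmacro_def)
  have endpoints: "(\<Sum>v\<in>?V. ((if v = B e then 1 else 0) - (if v = A e then 1 else 0)) * v u) = B e u - A e u"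
    if "e \<in> Q1" for e
    using that \<open>finite ?V\<close>
    by (simp add: left_diff_distrib sum_subtractf if_distrib[of "\<lambda>c. c * _"] cong: if_cong)
      (simp add: Vmacro_def)
  have "phihat Q1 A B (Bmacro Q1 A B \<xi>) u
      = (\<Sum>e\<in>Q1. \<xi> e * (\<Sum>v\<in>?V. ((if v = B e then 1 else 0) - (if v = A e then 1 else 0)) * v u))"
    unfolding phihat_def Bmacro_def
    by (simp add: sum_distrib_right sum_distrib_left mult.assoc sum.swap[where A = ?V])
  also have "\<dots> = boundary Q1 A B \<xi> u"
    unfolding boundary_def by (intro sum.cong refl) (simp add: endpoints)
  finally show "phihat Q1 A B (Bmacro Q1 A B \<xi>) u = boundary Q1 A B \<xi> u" .
qed

lemma Bmacro_in_Kerphihat: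
  assumes "finite Q1" "boundary Q1 A B \<xi> = (\<lambda>_. 0)"
  shows "Bmacro Q1 A B \<xi> \<in> Kerphihat Q1 A B"
  using assms by (simp add: Kerphihat_def Bmacro_in_FVmacro phihat_Bmacro)

lemma Bmacro_star_at_leaf:
  fixes r :: nat
  assumes "finite Q1" "e ` {1..r} \<subseteq> Q1" "inj_on w {0..r}" "j \<in> {1..r}"
    and "\<forall>i\<in>{1..r}. A (e i) = w 0 \<and> B (e i) = w i"
  shows "Bmacro Q1 A B (\<lambda>x. \<Sum>i=1..r. \<alpha> i * ind (e i) x) (w j) = \<alpha> j"
proof -
  have j: "j \<in> {0..r}" and "0 \<in> {0..r}"
    using assms(4) by auto
  have "w j \<noteq> w 0"
    using inj_on_eq_iff[OF assms(3) j \<open>0 \<in> {0..r}\<close>] assms(4) by auto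
  moreover have "w j = w i \<longleftrightarrow> i = j" if "i \<in> {1..r}" for i
    using inj_on_eq_iff[OF assms(3) j, of i] that by auto
  ultimately have "Bmacro Q1 A B (\<lambda>x. \<Sum>i=1..r. \<alpha> i * ind (e i) x) (w j) = (\<Sum>i=1..r. if i = j then \<alpha> i else 0)"
    unfolding Bmacro_def sum_combination_ind[OF assms(1,2)]
    using assms(4,5) by (intro sum.cong refl) auto
  then show ?thesis
    using assms(4) by simp
qed

theorem proposition4p7:
  fixes Q0 :: "'v set" and Q1 :: "'e set"
    and A B :: "'e \<Rightarrow> ('v, 'a::field) tensor"
    and r :: nat and w :: "nat \<Rightarrow> ('v,'a) tensor" and e :: "nat \<Rightarrow> 'e"
    and \<alpha> :: "nat \<Rightarrow> 'a"
  assumes H: "hypergraph Q0 Q1 A B"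
    and r: "r \<ge> 1"
    and w_in: "\<forall>i\<in>{0..r}. w i \<in> Vmacro Q1 A B"
    and w_dist: "inj_on w {0..r}"
    and e_in: "\<forall>i\<in>{1..r}. e i \<in> Q1"
    and e_dist: "inj_on e {1..r}"
    and e_lab: "\<forall>i\<in>{1..r}. A (e i) = w 0 \<and> B (e i) = w i"
    and \<alpha>_nz: "\<exists>i\<in>{1..r}. \<alpha> i \<noteq> 0"
    and rel: "(\<lambda>u. \<Sum>i=1..r. \<alpha> i * (w i u - w 0 u)) = (\<lambda>_. 0)"
  shows "let \<xi> = (\<lambda>x. \<Sum>i=1..r. \<alpha> i * ind (e i) x) in
           boundary Q1 A B \<xi> = (\<lambda>_. 0) \<and>
           Bmacro Q1 A B \<xi> \<in> (ImBmacro Q1 A B \<inter> Kerphihat Q1 A B) - {(\<lambda>_. 0)} \<and>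
           delta Q1 A B \<ge> 1"
proof -
  define \<xi> where "\<xi> = (\<lambda>x. \<Sum>i=1..r. \<alpha> i * ind (e i) x)"
  have Q1: "finite Q1" "e ` {1..r} \<subseteq> Q1"
    using H e_in by (auto simp: hypergraph_def)
  have "boundary Q1 A B \<xi> u = (\<Sum>i=1..r. \<alpha> i * (w i u - w 0 u))" for u
    unfolding boundary_def \<xi>_def sum_combination_ind[OF Q1] using e_lab by simp
  then have \<partial>: "boundary Q1 A B \<xi> = (\<lambda>_. 0)"
    using rel by (simp add: fun_eq_iff)
  have "\<forall>x. x \<notin> Q1 \<longrightarrow> \<xi> x = 0"
    using e_in by (auto simp: \<xi>_def ind_def intro!: sum.neutral)
  then have Im: "Bmacro Q1 A B \<xi> \<in> ImBmacro Q1 A B"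
    unfolding ImBmacro_def by blast
  have Ker: "Bmacro Q1 A B \<xi> \<in> Kerphihat Q1 A B"
    using Bmacro_in_Kerphihat[OF Q1(1) \<partial>] .
  obtain j where j: "j \<in> {1..r}" "\<alpha> j \<noteq> 0"
    using \<alpha>_nz by blast
  have "Bmacro Q1 A B \<xi> (w j) = \<alpha> j"
    unfolding \<xi>_def by (rule Bmacro_star_at_leaf[OF Q1 w_dist j(1) e_lab])
  then have nz: "Bmacro Q1 A B \<xi> \<noteq> (\<lambda>_. 0)"
    using j(2) by auto
  interpret vs: vector_space "fscale :: 'a \<Rightarrow> (('v,'a) tensor \<Rightarrow> 'a) \<Rightarrow> _"
    by (rule vector_space_fscale)
  have "ImBmacro Q1 A B \<inter> Kerphihat Q1 A B \<subseteq> vs.span (ind ` Vmacro Q1 A B)"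
    using finite_support_subset_span_ind[of "Vmacro Q1 A B"] Q1(1)
    by (auto simp: Kerphihat_def FVmacro_def Vmacro_def)
  then have "delta Q1 A B \<ge> 1"
    unfolding delta_def
    using vs.dim_ge_1_if_nonzero_in_finite_span[OF IntI[OF Im Ker]] nz Q1(1)
    by (simp add: Vmacro_def zero_fun_def)
  then show ?thesis
    using \<partial> Im Ker nz by (simp add: \<xi>_def)
qed

end
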